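(* Let $d\in\mathbb{N}$, $c=10d+2400$, and let $K$ be a positive real number. Define $b:\mathbb{N}\to(0,\infty)$ by \[ b(s)=\begin{cases}c\sqrt{s}\,\big(sK^{-\frac{1}{d+1}}\big)^{-1} & \text{if } s\ge K^{\frac{1}{d+1}},\\ c\sqrt{s}\,\big(sK^{-\frac{1}{d+1}}\big)^{-0.1} & \text{if } s<K^{\frac{1}{d+1}}.\end{cases} \] Let $g:(0,\infty)\to(0,\infty)$ be given by $g(\lambda)=10e^{-\lambda^2/4}$ if $\lambda\ge2$ and $g(\lambda)=10\log(1+2\lambda^{-1})$ if $0<\lambda<2$. Then \[ \sum_{i=0}^{\infty}\frac{K}{2^{i(d+1)}}\,g\Big(\frac{b(2^i)}{2^{i/2}}\Big)\le1. \]
   Context: $\log$ denotes the natural logarithm. *)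

theory Defs
  imports "HOL-Analysis.Analysis"
begin

definition cconst :: "nat \<Rightarrow> real" where
  "cconst d = 10 * real d + 2400"

definition bfun :: "nat \<Rightarrow> real \<Rightarrow> nat \<Rightarrow> real" where
  "bfun d K s =
     (if real s \<ge> K powr (1 / (real d + 1))
      then cconst d * sqrt (real s) * (real s * K powr (- 1 / (real d + 1))) powr (-1)
      else cconst d * sqrt (real s) * (real s * K powr (- 1 / (real d + 1))) powr (-0.1))"

definition gfun :: "real \<Rightarrow> real" where
  "gfun lam = (if lam \<ge> 2 then 10 * exp (- (lam^2) / 4) else 10 * ln (1 + 2 / lam))"

end

theory Submission
  imports Defs
begin

(* Put T = K^(1/(d+1)) and x = 2^i/T. The i-th summand is x^-(d+1) g(c/x) for x >= 1 and
   x^-(d+1) g(c x^-0.1) for x < 1. For x < 1 the Gaussian branch of g beats any power of 1/x,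
   giving the bound x/100; for x >= 1 the estimates exp(-t) <= 1/t and ln(1+u) <= 2 sqrt u give
   0.12 x^(-1/4). Over the grid x = 2^i/T the first bound sums to at most 2/100 and the second to
   a geometric series of ratio 2^(-1/4), in total less than 1. *)

lemma power_div_le_exp:
  fixes w :: real
  assumes "0 \<le> w" "0 < n"
  shows "(w / real n) ^ n \<le> exp w"
proof -
  have "(w / real n) ^ n \<le> (1 + w / real n) ^ n"
    using assms by (intro power_mono) auto
  also have "\<dots> \<le> exp w"
    using assms by (intro exp_ge_one_plus_x_over_n_power_n) auto
  finally show ?thesis .
qed

lemma ln_one_plus_le_two_sqrt:
  fixes u :: real
  assumes "0 \<le> u"
  shows "ln (1 + u) \<le> 2 * sqrt u"
proof -
  have "ln (1 + u) = 2 * ln (sqrt (1 + u))"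
    using assms by (simp add: ln_sqrt)
  also have "\<dots> \<le> 2 * (sqrt (1 + u) - 1)"
    using ln_le_minus_one[of "sqrt (1 + u)"] assms by simp
  also have "\<dots> \<le> 2 * sqrt u"
    using sqrt_add_le_add_sqrt[of 1 u] assms by simp
  finally show ?thesis .
qed

lemma dyadic_head_sum_le:
  fixes f :: "real \<Rightarrow> real" and A T :: real
  assumes A: "0 \<le> A" and T: "0 < T" and below: "\<And>i. i < m \<Longrightarrow> 2^i < T"
    and small: "\<And>x. 0 < x \<Longrightarrow> x < 1 \<Longrightarrow> f x \<le> A * x"
  shows "(\<Sum>i<m. f (2^i / T)) \<le> 2 * A"
proof -
  have "(\<Sum>i<m. f (2^i / T)) \<le> (\<Sum>i<m. A * (2^i / T))"
    using below T by (intro sum_mono small) auto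
  also have "\<dots> = A * (\<Sum>i<m. 2^i) / T"
    by (simp add: sum_distrib_left sum_divide_distrib)
  also have "\<dots> = A * (2^m - 1) / T"
    by (simp add: sum_gp_strict)
  also have "\<dots> \<le> 2 * A"
  proof (cases m)
    case (Suc k)
    then have "2^m < 2 * T"
      using below[of k] by simp
    then have "A * (2^m - 1) \<le> A * (2 * T)"
      using A by (intro mult_left_mono) auto
    then show ?thesis
      using T by (simp add: field_simps)
  qed (simp add: A)
  finally show ?thesis .
qed

lemma dyadic_tail_sum_le:
  fixes f :: "real \<Rightarrow> real" and B T p :: real
  assumes T: "0 < T" "T \<le> 2^m" and p: "0 < p"
    and nonneg: "\<And>x. 0 < x \<Longrightarrow> 0 \<le> f x"
    and large: "\<And>x. 1 \<le> x \<Longrightarrow> f x \<le> B * x powr (-p)"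
  shows "summable (\<lambda>j. f (2^(j + m) / T)) \<and> (\<Sum>j. f (2^(j + m) / T)) \<le> B / (1 - 2 powr (-p))"
proof -
  define q :: real where "q = 2 powr (-p)"
  have "0 \<le> B"
    using nonneg[of 1] large[of 1] by simp
  have tail: "f (2^(j + m) / T) \<le> B * q^j" for j
  proof -
    have "2^j \<le> 2^(j + m) / T"
      using T by (simp add: power_add field_simps mult_left_mono)
    moreover have "1 \<le> (2::real)^j" by simp
    ultimately have "f (2^(j + m) / T) \<le> B * (2^(j + m) / T) powr (-p)"
      by (intro large) linarith
    also have "\<dots> \<le> B * (2^j) powr (-p)"
      using \<open>0 \<le> B\<close> \<open>2^j \<le> 2^(j + m) / T\<close> p by (intro mult_left_mono powr_mono2') auto
    also have "(2^j :: real) powr (-p) = q^j"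
      by (simp add: q_def powr_realpow[symmetric] powr_powr mult.commute flip: powr_power)
    finally show ?thesis .
  qed
  have geometric: "(\<lambda>j. B * q^j) sums (B / (1 - q))"
    using sums_mult[OF geometric_sums, of q B] p by (simp add: q_def powr_less_one)
  have "summable (\<lambda>j. f (2^(j + m) / T))"
    using nonneg T tail by (intro summable_comparison_test'[OF sums_summable[OF geometric]]) auto
  moreover have "(\<Sum>j. f (2^(j + m) / T)) \<le> B / (1 - q)"
    using sums_le[OF tail summable_sums geometric] \<open>summable (\<lambda>j. f (2^(j + m) / T))\<close> by blast
  ultimately show ?thesis
    by (simp add: q_def)
qed

lemma dyadic_sum_le:
  fixes f :: "real \<Rightarrow> real" and A B T p :: real
  assumes T: "0 < T" and p: "0 < p"
    and nonneg: "\<And>x. 0 < x \<Longrightarrow> 0 \<le> f x"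
    and small: "\<And>x. 0 < x \<Longrightarrow> x < 1 \<Longrightarrow> f x \<le> A * x"
    and large: "\<And>x. 1 \<le> x \<Longrightarrow> f x \<le> B * x powr (-p)"
  shows "summable (\<lambda>i. f (2^i / T)) \<and> (\<Sum>i. f (2^i / T)) \<le> 2 * A + B / (1 - 2 powr (-p))"
proof -
  have "\<exists>m. T \<le> 2^m"
    using real_arch_pow[of 2 T] by (auto intro: less_imp_le)
  then obtain m where m: "T \<le> 2^m" and below: "\<And>i. i < m \<Longrightarrow> 2^i < T"
    by (auto simp: exists_least_iff[of "\<lambda>m. T \<le> 2^m"] not_le)
  have "0 \<le> A"
    using nonneg[of "1/2"] small[of "1/2"] by simp
  have head: "(\<Sum>i<m. f (2^i / T)) \<le> 2 * A"
    using \<open>0 \<le> A\<close> T below small by (rule dyadic_head_sum_le)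
  have tail: "summable (\<lambda>j. f (2^(j + m) / T)) \<and> (\<Sum>j. f (2^(j + m) / T)) \<le> B / (1 - 2 powr (-p))"
    using T m p nonneg large by (rule dyadic_tail_sum_le)
  then have "summable (\<lambda>i. f (2^i / T))"
    using summable_iff_shift by blast
  then show ?thesis
    using head tail suminf_split_initial_segment[of "\<lambda>i. f (2^i / T)" m] by simp
qed

lemma gfun_nonneg: "0 < lam \<Longrightarrow> 0 \<le> gfun lam"
  unfolding gfun_def by auto

lemma gfun_le_inverse_square:
  assumes "2 \<le> lam"
  shows "gfun lam \<le> 40 / lam^2"
proof -
  define w where "w = lam^2 / 4"
  have "0 < w" using assms by (simp add: w_def)
  have "w \<le> exp w"
    using exp_ge_add_one_self[of w] by linarith
  then have "exp (- w) \<le> 1 / w"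
    using \<open>0 < w\<close> by (simp add: exp_minus field_simps)
  then show ?thesis
    using assms by (simp add: gfun_def w_def)
qed

lemma gfun_le_sqrt:
  assumes "0 < lam" "lam < 2"
  shows "gfun lam \<le> 20 * sqrt (2 / lam)"
  using ln_one_plus_le_two_sqrt[of "2 / lam"] assms by (simp add: gfun_def)

lemma gfun_div_power4_le_of_ge_2:
  fixes c z :: real
  assumes z: "1 \<le> z" and c: "2400 \<le> c" and lam: "2 \<le> c / z^4"
  shows "gfun (c / z^4) \<le> 0.12 * z^3"
proof -
  have "z^4 \<le> c / 2"
    using z lam by (simp add: field_simps)
  also have "\<dots> \<le> (0.006 * c)^4"
  proof -
    have "1 / 2 \<le> 0.006^4 * (2400::real)^3" by (simp add: power_divide)
    also have "\<dots> \<le> 0.006^4 * c^3"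
      using c by (intro mult_left_mono power_mono) auto
    finally show ?thesis
      using c by (simp add: power_mult_distrib power3_eq_cube power4_eq_xxxx)
  qed
  finally have "z \<le> 0.006 * c"
    using c z by simp
  then have "z^4 * z \<le> c / 2 * (0.006 * c)"
    using \<open>z^4 \<le> c / 2\<close> z by (intro mult_mono) auto
  have "gfun (c / z^4) \<le> 40 / (c / z^4)^2"
    using lam by (rule gfun_le_inverse_square)
  also have "\<dots> = 40 * (z^4 * z) * z^3 / c^2"
    using c by (simp add: field_simps power_numeral_reduce)
  also have "\<dots> \<le> 40 * (c / 2 * (0.006 * c)) * z^3 / c^2"
    using \<open>z^4 * z \<le> c / 2 * (0.006 * c)\<close> z
    by (intro divide_right_mono mult_right_mono mult_left_mono) auto
  also have "\<dots> = 0.12 * z^3"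
    using c by (simp add: power2_eq_square)
  finally show ?thesis .
qed

lemma gfun_div_power4_le_of_less_2:
  fixes c z :: real
  assumes z: "1 \<le> z" and c: "2400 \<le> c" and lam: "c / z^4 < 2"
  shows "gfun (c / z^4) \<le> 0.12 * z^3"
proof -
  have "c / 2 \<le> z^4"
    using z lam by (simp add: field_simps)
  then have "24^2 \<le> (z^2)^2"
    using c by (simp add: power_mult[symmetric])
  then have "24 \<le> z^2"
    by (rule power2_le_imp_le) simp
  have "2 / c \<le> 2 / 2400"
    using c by (intro divide_left_mono) auto
  also have "\<dots> \<le> (0.006 * z)^2"
    using \<open>24 \<le> z^2\<close> by (simp add: power_mult_distrib power_divide)
  finally have "sqrt (2 / c) \<le> 0.006 * z"
    using z by (intro real_le_lsqrt) auto
  have "gfun (c / z^4) \<le> 20 * sqrt (2 / (c / z^4))"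
    using lam c z by (intro gfun_le_sqrt) auto
  also have "\<dots> = 20 * sqrt (2 / c * (z^2)^2)"
    by (simp flip: power_mult)
  also have "\<dots> = 20 * sqrt (2 / c) * z^2"
    by (simp only: real_sqrt_mult real_sqrt_abs abs_power2)
  also have "\<dots> \<le> 0.12 * z * z^2"
    using \<open>sqrt (2 / c) \<le> 0.006 * z\<close> by (intro mult_right_mono) auto
  also have "\<dots> = 0.12 * z^3"
    by (simp add: power3_eq_cube power2_eq_square)
  finally show ?thesis .
qed

lemma gfun_div_le_powr:
  fixes c x :: real
  assumes x: "1 \<le> x" and c: "2400 \<le> c"
  shows "gfun (c / x) \<le> 0.12 * x powr (3/4)"
proof -
  define z where "z = x powr (1/4)"
  have z: "1 \<le> z" "x = z^4"
    using x by (auto simp: z_def ge_one_powr_ge_zero powr_power)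
  have "x powr (3/4) = z^3"
    using x by (simp add: z_def powr_power)
  moreover have "gfun (c / z^4) \<le> 0.12 * z^3"
  proof (cases "2 \<le> c / z^4")
    case True
    with z(1) c show ?thesis by (rule gfun_div_power4_le_of_ge_2)
  next
    case False
    with z(1) c show ?thesis by (intro gfun_div_power4_le_of_less_2) auto
  qed
  ultimately show ?thesis
    using z(2) by simp
qed

definition scaled_term :: "nat \<Rightarrow> real \<Rightarrow> real" where
  "scaled_term d x =
     (1 / x)^(d + 1) * gfun (if 1 \<le> x then cconst d / x else cconst d * x powr (-0.1))"

lemma scaled_term_nonneg:
  assumes "0 < x"
  shows "0 \<le> scaled_term d x"
proof -
  have "0 < cconst d" by (simp add: cconst_def)
  then show ?thesis
    using assms by (simp add: scaled_term_def gfun_nonneg)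
qed

lemma scaled_term_le_large:
  assumes x: "1 \<le> x"
  shows "scaled_term d x \<le> 0.12 * x powr (-1/4)"
proof -
  have c: "2400 \<le> cconst d" by (simp add: cconst_def)
  have g_nonneg: "0 \<le> gfun (cconst d / x)"
    using x c by (simp add: gfun_nonneg)
  have g_le: "gfun (cconst d / x) \<le> 0.12 * x powr (3/4)"
    using x c by (rule gfun_div_le_powr)
  have "(1 / x)^(d + 1) \<le> (1 / x)^1"
    using x by (intro power_decreasing) auto
  have "scaled_term d x = (1 / x)^(d + 1) * gfun (cconst d / x)"
    using x by (simp add: scaled_term_def)
  also have "\<dots> \<le> (1 / x) * (0.12 * x powr (3/4))"
    using x g_nonneg g_le \<open>(1 / x)^(d + 1) \<le> (1 / x)^1\<close> by (intro mult_mono) auto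
  also have "\<dots> = 0.12 * x powr (-1/4)"
    using powr_diff[of x "3/4" 1] x by simp
  finally show ?thesis .
qed

lemma exp_cconst_sq_ge_power:
  fixes y :: real
  assumes "1 \<le> y"
  shows "1000 * y^(10 * (d + 2)) \<le> exp ((cconst d * y)^2 / 4)"
proof -
  define c where "c = cconst d"
  define n where "n = 5 * (d + 2)"
  have "1000 \<le> c^2 / (4 * n)"
  proof -
    have "4 * real n * 1000 \<le> c^2"
      by (simp add: n_def c_def cconst_def power2_eq_square algebra_simps)
    then show ?thesis
      by (simp add: n_def field_simps)
  qed
  have "1000 * y^(10 * (d + 2)) = 1000 * (y^2)^n"
    by (simp add: n_def flip: power_mult)
  also have "\<dots> \<le> (c^2 / (4 * n))^n * (y^2)^n"
  proof (rule mult_right_mono)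
    have "(1000::real) \<le> (c^2 / (4 * n))^1"
      using \<open>1000 \<le> c^2 / (4 * n)\<close> by (simp only: power_one_right)
    also have "\<dots> \<le> (c^2 / (4 * n))^n"
    proof (rule power_increasing)
      show "1 \<le> n" by (simp add: n_def)
      show "1 \<le> c^2 / (4 * n)"
        using \<open>1000 \<le> c^2 / (4 * n)\<close> by linarith
    qed
    finally show "1000 \<le> (c^2 / (4 * n))^n" .
  qed simp
  also have "\<dots> = ((c * y)^2 / 4 / n)^n"
    by (simp add: power_mult_distrib power_divide)
  also have "\<dots> \<le> exp ((c * y)^2 / 4)"
    by (rule power_div_le_exp) (simp_all add: n_def)
  finally show ?thesis
    by (simp add: c_def)
qed

lemma scaled_term_le_small:
  assumes x: "0 < x" "x < 1"
  shows "scaled_term d x \<le> x / 100"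
proof -
  define y where "y = x powr (-0.1)"
  define w where "w = (cconst d * y)^2 / 4"
  have "1 \<le> y"
    using x by (simp add: y_def powr_minus_divide powr_le1)
  have "y^10 = 1 / x"
    using x by (simp add: y_def powr_power powr_neg_one)
  have "2400 \<le> cconst d" by (simp add: cconst_def)
  moreover have "cconst d \<le> cconst d * y"
    using \<open>1 \<le> y\<close> \<open>2400 \<le> cconst d\<close> by simp
  ultimately have "2 \<le> cconst d * y" by linarith
  have "1000 * (1 / x)^(d + 2) \<le> exp w"
    using exp_cconst_sq_ge_power[OF \<open>1 \<le> y\<close>, of d]
    by (simp add: w_def \<open>y^10 = 1 / x\<close>[symmetric] power_add flip: power_mult)
  have "scaled_term d x = 10 * (1 / x)^(d + 1) / exp w"
    using x \<open>2 \<le> cconst d * y\<close> by (simp add: scaled_term_def gfun_def y_def w_def exp_minus field_simps)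
  also have "\<dots> \<le> 10 * (1 / x)^(d + 1) / (1000 * (1 / x)^(d + 2))"
    using x \<open>1000 * (1 / x)^(d + 2) \<le> exp w\<close> by (intro divide_left_mono) auto
  also have "\<dots> = x / 100"
    using x by (simp add: field_simps)
  finally show ?thesis .
qed

lemma summand_eq_scaled_term:
  assumes K: "0 < K"
  shows "K / 2^(i * (d + 1)) * gfun (bfun d K (2^i) / 2 powr (real i / 2))
    = scaled_term d (2^i / K powr (1 / (real d + 1)))"
proof -
  define T where "T = K powr (1 / (real d + 1))"
  define x where "x = (2::real)^i / T"
  have "0 < T" using K by (simp add: T_def)
  have "T^(d + 1) = T powr real (d + 1)"
    using \<open>0 < T\<close> by (rule powr_realpow[symmetric])
  also have "\<dots> = K"
    using K by (simp add: T_def powr_powr add.commute)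
  finally have "T^(d + 1) = K" .
  have "K powr (- 1 / (real d + 1)) = 1 / T"
    using K by (simp add: T_def powr_minus_divide)
  have "(K powr (1 / (real d + 1)) \<le> real (2^i)) = (1 \<le> x)"
    using \<open>0 < T\<close> by (simp add: x_def T_def[symmetric])
  moreover have "real (2^i) * K powr (- 1 / (real d + 1)) = x"
    using \<open>K powr (- 1 / (real d + 1)) = 1 / T\<close> by (simp add: x_def)
  ultimately have "bfun d K (2^i) = cconst d * sqrt (2^i)
      * (if 1 \<le> x then x powr (-1) else x powr (-0.1))"
    unfolding bfun_def by simp
  moreover have "2 powr (real i / 2) = sqrt (2^i)"
    by (simp add: powr_half_sqrt[symmetric] powr_powr flip: powr_realpow)
  moreover have "0 < x"
    using \<open>0 < T\<close> by (simp add: x_def)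
  ultimately have "bfun d K (2^i) / 2 powr (real i / 2)
      = (if 1 \<le> x then cconst d / x else cconst d * x powr (-0.1))"
    by (simp add: powr_neg_one)
  moreover have "K / 2^(i * (d + 1)) = (1 / x)^(d + 1)"
    using \<open>T^(d + 1) = K\<close> by (simp add: x_def power_divide power_add flip: power_mult)
  ultimately show ?thesis
    by (simp add: scaled_term_def x_def T_def)
qed

theorem lemma3p2:
  fixes d :: nat and K :: real
  assumes "K > 0"
  shows "summable (\<lambda>i::nat. K / 2 ^ (i * (d + 1)) * gfun (bfun d K (2 ^ i) / 2 powr (real i / 2)))
    \<and> (\<Sum>i. K / 2 ^ (i * (d + 1)) * gfun (bfun d K (2 ^ i) / 2 powr (real i / 2))) \<le> 1"
proof -
  define T where "T = K powr (1 / (real d + 1))"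
  have "0 < T" using assms by (simp add: T_def)
  have summand: "(\<lambda>i. K / 2 ^ (i * (d + 1)) * gfun (bfun d K (2 ^ i) / 2 powr (real i / 2)))
      = (\<lambda>i. scaled_term d (2^i / T))"
    unfolding T_def using assms by (intro ext summand_eq_scaled_term)
  have "summable (\<lambda>i. scaled_term d (2^i / T))
      \<and> (\<Sum>i. scaled_term d (2^i / T)) \<le> 2 * (1 / 100) + 0.12 / (1 - 2 powr (-1/4))"
    using dyadic_sum_le[where f = "scaled_term d" and T = T and p = "1/4" and A = "1/100" and B = "0.12"]
      \<open>0 < T\<close> scaled_term_nonneg scaled_term_le_small scaled_term_le_large
    by simp
  moreover have "2 * (1 / 100) + 0.12 / (1 - 2 powr (-1/4)) \<le> (1::real)"
  proof -
    have "1.15^4 \<le> (2 powr (1/4) :: real)^4"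
      by (simp add: powr_power power_divide)
    then have "1.15 \<le> (2::real) powr (1/4)"
      by (subst (asm) power_mono_iff) auto
    then show ?thesis
      by (simp add: powr_minus_divide field_simps)
  qed
  ultimately show ?thesis
    unfolding summand by linarith
qed

end
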